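(* For every regular language $L \subseteq \Sigma^*$ over a finite alphabet $\Sigma$, the 2-overlap catenation closure $2\mathbb{OC}^*(L)$ is regular.
   Context: The 2-overlap catenation of strings $x, y \in \Sigma^*$ is $x \,\overline{\odot}^2\, y = \{ uvw \mid x = uv,\ y = vw,\ u,w \in \Sigma^*,\ v \in \Sigma^*,\ |v| \geq 2 \}$, extended to languages by $L_1 \,\overline{\odot}^2\, L_2 = \bigcup_{x\in L_1, y \in L_2} x \,\overline{\odot}^2\, y$. $2\mathbb{OC}^{(0)}(L) = L$, $2\mathbb{OC}^{(i+1)}(L) = 2\mathbb{OC}^{(i)}(L) \,\overline{\odot}^2\, 2\mathbb{OC}^{(i)}(L)$, and $2\mathbb{OC}^*(L) = \bigcup_{i \geq 0} 2\mathbb{OC}^{(i)}(L)$. *)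

theory Defs
  imports Main
begin

datatype 'a rexp =
    Zero
  | One
  | Atom 'a
  | Plus "'a rexp" "'a rexp"
  | Times "'a rexp" "'a rexp"
  | Star "'a rexp"

definition conc :: "'a list set \<Rightarrow> 'a list set \<Rightarrow> 'a list set" where
  "conc A B = {u @ v | u v. u \<in> A \<and> v \<in> B}"

definition kleene_star :: "'a list set \<Rightarrow> 'a list set" where
  "kleene_star A = (\<Union>n. (conc A ^^ n) {[]})"

fun lang :: "'a rexp \<Rightarrow> 'a list set" where
  "lang Zero = {}"
| "lang One = {[]}"
| "lang (Atom a) = {[a]}"
| "lang (Plus r s) = lang r \<union> lang s"
| "lang (Times r s) = conc (lang r) (lang s)"
| "lang (Star r) = kleene_star (lang r)"

definition regular :: "'a list set \<Rightarrow> bool" where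
  "regular L \<longleftrightarrow> (\<exists>r. lang r = L)"

definition overlap2 :: "'a list \<Rightarrow> 'a list \<Rightarrow> 'a list set" where
  "overlap2 x y = {u @ v @ w | u v w. x = u @ v \<and> y = v @ w \<and> length v \<ge> 2}"

definition overlap2_lang :: "'a list set \<Rightarrow> 'a list set \<Rightarrow> 'a list set" where
  "overlap2_lang L1 L2 = (\<Union>x\<in>L1. \<Union>y\<in>L2. overlap2 x y)"

fun OC2_iter :: "nat \<Rightarrow> 'a list set \<Rightarrow> 'a list set" where
  "OC2_iter 0 L = L"
| "OC2_iter (Suc i) L = overlap2_lang (OC2_iter i L) (OC2_iter i L)"

definition OC2_star :: "'a list set \<Rightarrow> 'a list set" where
  "OC2_star L = (\<Union>i. OC2_iter i L)"

end

theory Submission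
  imports Defs "HOL-Library.Sublist"
begin

text \<open>
  A word of length at least 2 overlaps itself, so the iterates of the 2-overlap catenation grow
  monotonically on long words, and an overlap of two iterates can be rebuilt one factor at a time.
  Hence \<open>OC2_star L = L \<union> R\<close>, where \<open>R\<close> is the least language containing the words of \<open>L\<close> of
  length \<open>\<ge> 2\<close> and closed under \<open>x @ b \<in> R, b @ c \<in> L, 2 \<le> |b| \<Longrightarrow> x @ b @ c \<in> R\<close>.

  Regularity of \<open>R\<close> is shown via left quotients (Myhill--Nerode): regular languages have
  finitely many left quotients, and over a finite alphabet the converse holds.  For \<open>u \<noteq> []\<close>,
  the quotient of \<open>R\<close> by \<open>u\<close> is determined by whether \<open>u \<in> R\<close>, by the quotients of \<open>L\<close> by the
  nonempty suffixes of \<open>u\<close>, and by the quotients of \<open>L\<close> by the suffixes of \<open>u\<close> at which a factor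
  may start that leads out of \<open>u\<close>: finitely many possibilities.
\<close>

section \<open>Left quotients of regular languages\<close>

definition lquot :: "'a list \<Rightarrow> 'a list set \<Rightarrow> 'a list set" where
  "lquot w A = {z. w @ z \<in> A}"

definition finite_quotients :: "'a list set \<Rightarrow> bool" where
  "finite_quotients A \<longleftrightarrow> finite (range (\<lambda>w. lquot w A))"

lemma lquot_Nil [simp]: "lquot [] A = A"
  by (simp add: lquot_def)

lemma lquot_append: "lquot (x @ y) A = lquot y (lquot x A)"
  by (simp add: lquot_def)

lemma finite_quotientsI:
  assumes "\<And>w. lquot w A \<in> F" and "finite F"
  shows "finite_quotients A"
  unfolding finite_quotients_def using assms by (blast intro: finite_subset)

lemma concI: "x \<in> A \<Longrightarrow> y \<in> B \<Longrightarrow> z = x @ y \<Longrightarrow> z \<in> conc A B"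
  by (auto simp: conc_def)

lemma concE: "z \<in> conc A B \<Longrightarrow> (\<And>x y. z = x @ y \<Longrightarrow> x \<in> A \<Longrightarrow> y \<in> B \<Longrightarrow> P) \<Longrightarrow> P"
  by (auto simp: conc_def)

lemma Nil_in_kleene_star: "[] \<in> kleene_star A"
  unfolding kleene_star_def by (rule UN_I[of 0]) auto

lemma append_in_kleene_star: "x \<in> A \<Longrightarrow> y \<in> kleene_star A \<Longrightarrow> x @ y \<in> kleene_star A"
proof -
  assume x: "x \<in> A" and "y \<in> kleene_star A"
  then obtain n where "y \<in> (conc A ^^ n) {[]}" unfolding kleene_star_def by auto
  with x have "x @ y \<in> (conc A ^^ Suc n) {[]}" by (auto intro: concI)
  then show ?thesis unfolding kleene_star_def by blast
qed

lemma kleene_star_induct [consumes 1, case_names Nil append]: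
  assumes "w \<in> kleene_star A" and "P []"
    and "\<And>a w. a \<in> A \<Longrightarrow> w \<in> kleene_star A \<Longrightarrow> P w \<Longrightarrow> P (a @ w)"
  shows "P w"
proof -
  obtain n where "w \<in> (conc A ^^ n) {[]}" using assms(1) unfolding kleene_star_def by auto
  then show ?thesis
  proof (induction n arbitrary: w)
    case (Suc n)
    then obtain a w' where "w = a @ w'" "a \<in> A" "w' \<in> (conc A ^^ n) {[]}" by (auto elim: concE)
    moreover from this(3) have "w' \<in> kleene_star A" unfolding kleene_star_def by auto
    ultimately show ?case using Suc.IH assms(3) by blast
  qed (simp add: assms(2))
qed

lemma kleene_star_append: "x \<in> kleene_star A \<Longrightarrow> y \<in> kleene_star A \<Longrightarrow> x @ y \<in> kleene_star A"
  by (induction x rule: kleene_star_induct) (auto intro: append_in_kleene_star)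

lemma kleene_star_split:
  assumes "w @ z \<in> kleene_star A" and "w \<noteq> []"
  shows "\<exists>u v t s. w = u @ v \<and> v \<noteq> [] \<and> u \<in> kleene_star A \<and> v @ t \<in> A \<and>
    s \<in> kleene_star A \<and> z = t @ s"
  using assms
proof (induction "w @ z" arbitrary: w z rule: kleene_star_induct)
  case Nil
  then show ?case by simp
next
  case (append a y)
  from \<open>a @ y = w @ z\<close> obtain us where "(a = w @ us \<and> us @ y = z) \<or> (a @ us = w \<and> y = us @ z)"
    by (auto simp: append_eq_append_conv2)
  then show ?case
  proof (elim disjE conjE)
    assume "a = w @ us" "us @ y = z"
    with append show ?case
      by (intro exI[of _ "[]"] exI[of _ w] exI[of _ us] exI[of _ y]) (auto intro: Nil_in_kleene_star)
  next
    assume w: "a @ us = w" and y: "y = us @ z"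
    show ?case
    proof (cases "us = []")
      case True
      with append w y show ?thesis
        by (intro exI[of _ "[]"] exI[of _ w] exI[of _ "[]"] exI[of _ y]) (auto intro: Nil_in_kleene_star)
    next
      case False
      with append.hyps(3) y obtain u v t s where "us = u @ v" "v \<noteq> []" "u \<in> kleene_star A"
        "v @ t \<in> A" "s \<in> kleene_star A" "z = t @ s" by blast
      with w append.hyps(1) show ?thesis
        by (intro exI[of _ "a @ u"] exI[of _ v] exI[of _ t] exI[of _ s]) (auto intro: append_in_kleene_star)
    qed
  qed
qed

lemma lquot_Un: "lquot w (A \<union> B) = lquot w A \<union> lquot w B"
  by (auto simp: lquot_def)

lemma lquot_conc:
  "lquot w (conc A B) = conc (lquot w A) B \<union> (\<Union>v \<in> {v. \<exists>u. w = u @ v \<and> u \<in> A}. lquot v B)"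
proof (intro equalityI subsetI)
  fix z assume "z \<in> lquot w (conc A B)"
  then obtain x y where xy: "x @ y = w @ z" "x \<in> A" "y \<in> B" by (auto simp: lquot_def conc_def)
  then obtain us where "(x = w @ us \<and> us @ y = z) \<or> (x @ us = w \<and> y = us @ z)"
    by (auto simp: append_eq_append_conv2)
  with xy show "z \<in> conc (lquot w A) B \<union> (\<Union>v \<in> {v. \<exists>u. w = u @ v \<and> u \<in> A}. lquot v B)"
    by (auto simp: lquot_def conc_def)
qed (auto simp: lquot_def elim!: concE intro: concI)

lemma lquot_kleene_star:
  assumes "w \<noteq> []"
  shows "lquot w (kleene_star A) =
    (\<Union>v \<in> {v. \<exists>u. w = u @ v \<and> u \<in> kleene_star A \<and> v \<noteq> []}. conc (lquot v A) (kleene_star A))"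
proof (intro equalityI subsetI)
  fix z assume "z \<in> lquot w (kleene_star A)"
  then have "w @ z \<in> kleene_star A" by (simp add: lquot_def)
  from kleene_star_split[OF this assms] obtain u v t s where
    "w = u @ v" "v \<noteq> []" "u \<in> kleene_star A" "v @ t \<in> A" "s \<in> kleene_star A" "z = t @ s" by blast
  then show "z \<in> (\<Union>v \<in> {v. \<exists>u. w = u @ v \<and> u \<in> kleene_star A \<and> v \<noteq> []}. conc (lquot v A) (kleene_star A))"
    by (auto simp: conc_def lquot_def)
next
  fix z assume "z \<in> (\<Union>v \<in> {v. \<exists>u. w = u @ v \<and> u \<in> kleene_star A \<and> v \<noteq> []}. conc (lquot v A) (kleene_star A))"
  then obtain u v t s where "w = u @ v" "u \<in> kleene_star A" "v @ t \<in> A" "s \<in> kleene_star A" "z = t @ s"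
    by (auto simp: conc_def lquot_def)
  then have "w @ z = u @ ((v @ t) @ s)" and "u @ ((v @ t) @ s) \<in> kleene_star A"
    by (simp, meson append_in_kleene_star kleene_star_append)
  then show "z \<in> lquot w (kleene_star A)" by (simp add: lquot_def)
qed

lemma finite_quotients_empty: "finite_quotients {}"
  by (rule finite_quotientsI[of _ "{{}}"]) (auto simp: lquot_def)

lemma finite_quotients_Nil: "finite_quotients {[]}"
  by (rule finite_quotientsI[of _ "{{[]}, {}}"]) (auto simp: lquot_def)

lemma finite_quotients_singleton: "finite_quotients {[a]}"
proof (rule finite_quotientsI[of _ "{{[a]}, {[]}, {}}"])
  fix w show "lquot w {[a]} \<in> {{[a]}, {[]}, {}}"
    by (cases w; cases "tl w") (auto simp: lquot_def)
qed simp

lemma finite_quotients_Un: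
  assumes "finite_quotients A" and "finite_quotients B"
  shows "finite_quotients (A \<union> B)"
  by (rule finite_quotientsI[of _ "(\<lambda>(p, q). p \<union> q) ` (range (\<lambda>w. lquot w A) \<times> range (\<lambda>w. lquot w B))"])
    (use assms in \<open>auto simp: finite_quotients_def lquot_Un\<close>)

lemma finite_quotients_conc:
  assumes "finite_quotients A" and "finite_quotients B"
  shows "finite_quotients (conc A B)"
proof (rule finite_quotientsI)
  fix w
  show "lquot w (conc A B) \<in>
    (\<lambda>(p, Q). conc p B \<union> \<Union>Q) ` (range (\<lambda>w. lquot w A) \<times> Pow (range (\<lambda>w. lquot w B)))"
    unfolding lquot_conc by (rule image_eqI[of _ _ "(lquot w A, (\<lambda>v. lquot v B) ` _)"]) auto
qed (use assms in \<open>simp add: finite_quotients_def\<close>)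

lemma finite_quotients_kleene_star:
  assumes "finite_quotients A"
  shows "finite_quotients (kleene_star A)"
proof (rule finite_quotientsI)
  fix w
  show "lquot w (kleene_star A) \<in> insert (kleene_star A)
      ((\<lambda>Q. \<Union>q \<in> Q. conc q (kleene_star A)) ` Pow (range (\<lambda>w. lquot w A)))"
  proof (cases "w = []")
    case False
    show ?thesis unfolding lquot_kleene_star[OF False]
      by (rule insertI2, rule image_eqI[of _ _ "(\<lambda>v. lquot v A) ` _"]) (auto simp: image_image)
  qed simp
qed (use assms in \<open>simp add: finite_quotients_def\<close>)

lemma finite_quotients_lang: "finite_quotients (lang r)"
  by (induction r) (auto intro: finite_quotients_empty finite_quotients_Nil finite_quotients_singleton
      finite_quotients_Un finite_quotients_conc finite_quotients_kleene_star)

lemma regular_imp_finite_quotients: "regular A \<Longrightarrow> finite_quotients A"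
  unfolding regular_def using finite_quotients_lang by blast

section \<open>Languages with finitely many quotients are regular\<close>

lemma regular_Un: "regular A \<Longrightarrow> regular B \<Longrightarrow> regular (A \<union> B)"
  unfolding regular_def by (metis lang.simps(4))

lemma regular_conc: "regular A \<Longrightarrow> regular B \<Longrightarrow> regular (conc A B)"
  unfolding regular_def by (metis lang.simps(5))

lemma regular_kleene_star: "regular A \<Longrightarrow> regular (kleene_star A)"
  unfolding regular_def by (metis lang.simps(6))

lemma regular_singleton: "regular {w}"
proof (induction w)
  case Nil
  show ?case unfolding regular_def by (metis lang.simps(2))
next
  case (Cons a w)
  then obtain r where "lang r = {w}" unfolding regular_def by blast
  then have "lang (Times (Atom a) r) = {a # w}" by (auto simp: conc_def)
  then show ?case unfolding regular_def by blast
qed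

lemma regular_finite: "finite A \<Longrightarrow> regular A"
proof (induction rule: finite_induct)
  case empty
  show ?case unfolding regular_def by (metis lang.simps(1))
next
  case (insert w A)
  then show ?case using regular_Un[OF regular_singleton] by (metis insert_is_Un)
qed

lemma regular_Union: "finite F \<Longrightarrow> \<forall>X\<in>F. regular X \<Longrightarrow> regular (\<Union>F)"
  by (induction rule: finite_induct) (auto intro: regular_finite regular_Un)

text \<open>
  The states of the quotient automaton are the quotients themselves;
  \<open>walk S A p w q\<close> says that reading \<open>w \<in> lists S\<close> leads from \<open>p\<close> to \<open>q\<close> with all
  intermediate states (excluding \<open>p\<close> and \<open>q\<close>) in \<open>A\<close>.
\<close>

fun walk :: "'a set \<Rightarrow> 'a list set set \<Rightarrow> 'a list set \<Rightarrow> 'a list \<Rightarrow> 'a list set \<Rightarrow> bool" where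
  "walk S A p [] q \<longleftrightarrow> p = q"
| "walk S A p (a # w) q \<longleftrightarrow> a \<in> S \<and>
    (if w = [] then lquot [a] p = q else lquot [a] p \<in> A \<and> walk S A (lquot [a] p) w q)"

definition walk_lang :: "'a set \<Rightarrow> 'a list set set \<Rightarrow> 'a list set \<Rightarrow> 'a list set \<Rightarrow> 'a list set" where
  "walk_lang S A p q = {w. walk S A p w q}"

lemma walk_target: "walk S A p w q \<Longrightarrow> q = lquot w p"
proof (induction w arbitrary: p)
  case (Cons a w)
  then show ?case using lquot_append[of "[a]" w p] by (auto split: if_splits)
qed simp

lemma walk_mono: "walk S A p w q \<Longrightarrow> A \<subseteq> B \<Longrightarrow> walk S B p w q"
  by (induction w arbitrary: p) (auto split: if_splits)

lemma walk_append:
  "walk S A p x r \<Longrightarrow> walk S A r y q \<Longrightarrow> x = [] \<or> y = [] \<or> r \<in> A \<Longrightarrow> walk S A p (x @ y) q"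
  by (induction x arbitrary: p) (auto split: if_splits)

lemma walk_of_word: "w \<in> lists S \<Longrightarrow> walk S (range (\<lambda>v. lquot v A)) (lquot v A) w (lquot (v @ w) A)"
proof (induction w arbitrary: v)
  case (Cons a w)
  have "lquot [a] (lquot v A) = lquot (v @ [a]) A" by (simp add: lquot_append)
  with Cons show ?case using Cons.IH[of "v @ [a]"] by auto
qed simp

lemma walk_split_first:
  assumes "walk S (insert k A) p w q"
  shows "walk S A p w q \<or> (\<exists>x y. w = x @ y \<and> x \<noteq> [] \<and> length y < length w \<and>
    walk S A p x k \<and> walk S (insert k A) k y q)"
  using assms
proof (induction w arbitrary: p)
  case (Cons a w)
  let ?r = "lquot [a] p"
  consider "w = []" | "w \<noteq> []" "?r = k" | "w \<noteq> []" "?r \<noteq> k" by blast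
  then show ?case
  proof cases
    case 1
    with Cons.prems show ?thesis by simp
  next
    case 2
    with Cons.prems show ?thesis by (intro disjI2 exI[of _ "[a]"] exI[of _ w]) auto
  next
    case 3
    with Cons.prems have "a \<in> S" "?r \<in> A" "walk S (insert k A) ?r w q" by auto
    from Cons.IH[OF this(3)] show ?thesis
    proof (elim disjE exE conjE)
      fix x y assume "w = x @ y" "x \<noteq> []" "length y < length w" "walk S A ?r x k"
        "walk S (insert k A) k y q"
      with \<open>a \<in> S\<close> \<open>?r \<in> A\<close> show ?thesis by (intro disjI2 exI[of _ "a # x"] exI[of _ y]) auto
    qed (use 3 \<open>a \<in> S\<close> \<open>?r \<in> A\<close> in simp)
  qed
qed simp

lemma walk_through:
  "walk S (insert k A) k w q \<Longrightarrow> w \<in> conc (kleene_star (walk_lang S A k k)) (walk_lang S A k q)"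
proof (induction "length w" arbitrary: w rule: less_induct)
  case less
  from walk_split_first[OF less.prems] show ?case
  proof (elim disjE exE conjE)
    assume "walk S A k w q"
    then show ?thesis by (auto simp: walk_lang_def intro: concI Nil_in_kleene_star)
  next
    fix x y assume "w = x @ y" "length y < length w" "walk S A k x k" "walk S (insert k A) k y q"
    with less.hyps obtain y1 y2 where "y = y1 @ y2" "y1 \<in> kleene_star (walk_lang S A k k)"
      "y2 \<in> walk_lang S A k q" by (blast elim: concE)
    with \<open>w = x @ y\<close> \<open>walk S A k x k\<close> show ?thesis
      by (auto simp: walk_lang_def intro!: concI[of "x @ y1"] append_in_kleene_star)
  qed
qed

lemma walk_loops: "y \<in> kleene_star (walk_lang S A k k) \<Longrightarrow> walk S (insert k A) k y k"
  by (induction y rule: kleene_star_induct)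
    (auto simp: walk_lang_def intro: walk_append walk_mono)

text \<open>Kleene's construction: allow one more intermediate state \<open>k\<close>.\<close>

lemma walk_lang_insert:
  "walk_lang S (insert k A) p q =
    walk_lang S A p q \<union> conc (walk_lang S A p k) (conc (kleene_star (walk_lang S A k k)) (walk_lang S A k q))"
proof (intro equalityI subsetI)
  fix w assume "w \<in> walk_lang S (insert k A) p q"
  from walk_split_first[OF this[unfolded walk_lang_def, simplified]]
  show "w \<in> walk_lang S A p q \<union>
      conc (walk_lang S A p k) (conc (kleene_star (walk_lang S A k k)) (walk_lang S A k q))"
  proof (elim disjE exE conjE)
    fix x y assume "w = x @ y" "walk S A p x k" "walk S (insert k A) k y q"
    then have "x \<in> walk_lang S A p k" "y \<in> conc (kleene_star (walk_lang S A k k)) (walk_lang S A k q)"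
      by (auto simp: walk_lang_def dest: walk_through)
    with \<open>w = x @ y\<close> show ?thesis by (blast intro: concI)
  qed (simp add: walk_lang_def)
next
  fix w
  assume "w \<in> walk_lang S A p q \<union>
      conc (walk_lang S A p k) (conc (kleene_star (walk_lang S A k k)) (walk_lang S A k q))"
  then show "w \<in> walk_lang S (insert k A) p q"
  proof (elim UnE)
    assume "w \<in> conc (walk_lang S A p k) (conc (kleene_star (walk_lang S A k k)) (walk_lang S A k q))"
    then obtain x y z where w: "w = x @ y @ z" "walk S A p x k" "y \<in> kleene_star (walk_lang S A k k)"
      "walk S A k z q" by (auto simp: walk_lang_def elim!: concE)
    have "walk S (insert k A) k (y @ z) q"
      using walk_append[OF walk_loops[OF w(3)] walk_mono[OF w(4)]] by blast
    then have "walk S (insert k A) p (x @ y @ z) q"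
      using walk_append[OF walk_mono[OF w(2)]] by blast
    then show ?thesis using w(1) by (simp add: walk_lang_def)
  qed (auto simp: walk_lang_def intro: walk_mono)
qed

lemma walk_lang_empty_subset: "walk_lang S {} p q \<subseteq> insert [] ((\<lambda>a. [a]) ` S)"
proof
  fix w assume "w \<in> walk_lang S {} p q"
  then show "w \<in> insert [] ((\<lambda>a. [a]) ` S)"
    by (cases w) (auto simp: walk_lang_def split: if_splits)
qed

lemma regular_walk_lang: "finite A \<Longrightarrow> finite S \<Longrightarrow> regular (walk_lang S A p q)"
proof (induction A arbitrary: p q rule: finite_induct)
  case empty
  then show ?case by (meson finite_imageI finite_insert finite_subset regular_finite walk_lang_empty_subset)
next
  case (insert k A)
  then show ?case unfolding walk_lang_insert by (intro regular_Un regular_conc regular_kleene_star) auto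
qed

theorem finite_quotients_imp_regular:
  assumes "finite S" and "A \<subseteq> lists S" and "finite_quotients A"
  shows "regular A"
proof -
  let ?Q = "range (\<lambda>w. lquot w A)"
  have "A = (\<Union>q \<in> {q \<in> ?Q. [] \<in> q}. walk_lang S ?Q A q)"
  proof (intro equalityI subsetI)
    fix w assume "w \<in> A"
    then have "walk S ?Q A w (lquot w A)" and "[] \<in> lquot w A"
      using walk_of_word[of w S A "[]"] assms(2) by (auto simp: lquot_def)
    then show "w \<in> (\<Union>q \<in> {q \<in> ?Q. [] \<in> q}. walk_lang S ?Q A q)" by (auto simp: walk_lang_def)
  next
    fix w assume "w \<in> (\<Union>q \<in> {q \<in> ?Q. [] \<in> q}. walk_lang S ?Q A q)"
    then obtain q where "walk S ?Q A w q" "[] \<in> q" by (auto simp: walk_lang_def)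
    then show "w \<in> A" by (auto simp: lquot_def dest: walk_target)
  qed
  moreover have "regular (\<Union>q \<in> {q \<in> ?Q. [] \<in> q}. walk_lang S ?Q A q)"
    using assms(1,3) by (intro regular_Union) (auto simp: finite_quotients_def intro: regular_walk_lang)
  ultimately show ?thesis by simp
qed

section \<open>The 2-overlap closure as an overlap chain\<close>

definition long_words :: "'a list set \<Rightarrow> 'a list set" where
  "long_words L = {m \<in> L. 2 \<le> length m}"

inductive_set overlap_closure :: "'a list set \<Rightarrow> 'a list set" for M where
  base: "m \<in> M \<Longrightarrow> m \<in> overlap_closure M"
| overlap: "x @ b \<in> overlap_closure M \<Longrightarrow> b @ c \<in> M \<Longrightarrow> 2 \<le> length b \<Longrightarrow>
    x @ b @ c \<in> overlap_closure M"

lemma overlap_closure_lists: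
  assumes "M \<subseteq> lists S"
  shows "overlap_closure M \<subseteq> lists S"
proof
  fix w assume "w \<in> overlap_closure M"
  then show "w \<in> lists S" using assms by (induction rule: overlap_closure.induct) auto
qed

lemma overlap2_length: "t \<in> overlap2 x y \<Longrightarrow> 2 \<le> length x \<and> 2 \<le> length y"
  by (auto simp: overlap2_def)

lemma append_in_overlap2: "2 \<le> length b \<Longrightarrow> x @ b @ c \<in> overlap2 (x @ b) (b @ c)"
  unfolding overlap2_def by blast

lemma overlap_closure_overlap2:
  "y \<in> overlap_closure M \<Longrightarrow> x \<in> overlap_closure M \<Longrightarrow> t \<in> overlap2 x y \<Longrightarrow> t \<in> overlap_closure M"
proof (induction y arbitrary: x t rule: overlap_closure.induct)
  case (base m)
  then obtain u v w where "t = u @ v @ w" "x = u @ v" "m = v @ w" "2 \<le> length v"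
    by (auto simp: overlap2_def)
  with base show ?case by (auto intro: overlap_closure.overlap)
next
  case (overlap x' b c)
  from overlap.prems(2) obtain u v w where
    t: "t = u @ v @ w" and x: "x = u @ v" and vw: "(x' @ b) @ c = v @ w" and v: "2 \<le> length v"
    by (auto simp: overlap2_def)
  from vw obtain us where "(x' @ b = v @ us \<and> us @ c = w) \<or> ((x' @ b) @ us = v \<and> c = us @ w)"
    using append_eq_append_conv2[of "x' @ b" c v w] by blast
  then show ?case
  proof (elim disjE conjE)
    assume "x' @ b = v @ us" "us @ c = w"
    with overlap.IH[of x "u @ v @ us"] overlap.prems(1) x v have "(u @ x') @ b \<in> overlap_closure M"
      by (auto simp: overlap2_def)
    from overlap_closure.overlap[OF this overlap.hyps(2,3)] show ?thesis
      using \<open>x' @ b = v @ us\<close> \<open>us @ c = w\<close> t by (metis append.assoc)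
  next
    assume "(x' @ b) @ us = v" "c = us @ w"
    with overlap.hyps(2,3) overlap.prems(1) x have "(u @ x') @ (b @ us) \<in> overlap_closure M"
      "(b @ us) @ w \<in> M" "2 \<le> length (b @ us)" by auto
    from overlap_closure.overlap[OF this] show ?thesis
      using \<open>(x' @ b) @ us = v\<close> t by (metis append.assoc)
  qed
qed

text \<open>A long word overlaps itself completely, so it survives every further iteration.\<close>

lemma OC2_iter_long_mono:
  assumes "w \<in> OC2_iter i L" and "2 \<le> length w" and "i \<le> j"
  shows "w \<in> OC2_iter j L"
  using assms(3)
proof (induction j rule: dec_induct)
  case (step j)
  have "w \<in> overlap2 w w"
    using append_in_overlap2[OF assms(2), of "[]" "[]"] by simp
  with step.IH show ?case by (auto simp: overlap2_lang_def)
qed (use assms(1) in simp)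

lemma OC2_iter_subset: "OC2_iter i L \<subseteq> L \<union> overlap_closure (long_words L)"
proof (induction i)
  case (Suc i)
  show ?case
  proof
    fix t assume "t \<in> OC2_iter (Suc i) L"
    then obtain x y where "x \<in> OC2_iter i L" "y \<in> OC2_iter i L" "t \<in> overlap2 x y"
      by (auto simp: overlap2_lang_def)
    moreover from this(3) have "2 \<le> length x" "2 \<le> length y" by (auto dest: overlap2_length)
    ultimately have "x \<in> overlap_closure (long_words L)" "y \<in> overlap_closure (long_words L)"
      "t \<in> overlap2 x y"
      using Suc.IH by (auto simp: long_words_def intro: overlap_closure.base)
    then show "t \<in> L \<union> overlap_closure (long_words L)" by (blast intro: overlap_closure_overlap2)
  qed
qed simp

lemma overlap_closure_in_OC2_iter: "w \<in> overlap_closure (long_words L) \<Longrightarrow> \<exists>i. w \<in> OC2_iter i L"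
proof (induction rule: overlap_closure.induct)
  case (base m)
  then show ?case by (intro exI[of _ 0]) (auto simp: long_words_def)
next
  case (overlap x b c)
  then obtain i where "x @ b \<in> OC2_iter i L" by blast
  moreover have "b @ c \<in> OC2_iter i L"
    using overlap.hyps(2) OC2_iter_long_mono[of "b @ c" 0 L i] by (auto simp: long_words_def)
  ultimately have "x @ b @ c \<in> OC2_iter (Suc i) L"
    using append_in_overlap2[OF overlap.hyps(3)] by (auto simp: overlap2_lang_def)
  then show ?case by blast
qed

lemma OC2_star_eq: "OC2_star L = L \<union> overlap_closure (long_words L)"
proof (intro equalityI subsetI)
  fix w assume "w \<in> OC2_star L"
  then show "w \<in> L \<union> overlap_closure (long_words L)"
    using OC2_iter_subset by (auto simp: OC2_star_def)
next
  fix w assume "w \<in> L \<union> overlap_closure (long_words L)"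
  then show "w \<in> OC2_star L"
  proof (elim UnE)
    assume "w \<in> L"
    then show ?thesis unfolding OC2_star_def by (intro UN_I[of 0]) auto
  qed (auto simp: OC2_star_def dest: overlap_closure_in_OC2_iter)
qed

section \<open>Left quotients of the overlap closure\<close>

text \<open>
  \<open>overlap_extension M p y\<close>: the word \<open>y\<close> can be appended to a word ending in \<open>p\<close> by
  overlap steps whose overlaps lie inside the current word.
\<close>

inductive overlap_extension :: "'a list set \<Rightarrow> 'a list \<Rightarrow> 'a list \<Rightarrow> bool" for M where
  Nil: "overlap_extension M p []"
| overlap: "suffix b p \<Longrightarrow> 2 \<le> length b \<Longrightarrow> b @ c \<in> M \<Longrightarrow> overlap_extension M (p @ c) y \<Longrightarrow>
    overlap_extension M p (c @ y)"

lemma overlap_extension_snoc: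
  "overlap_extension M p y \<Longrightarrow> suffix b (p @ y) \<Longrightarrow> 2 \<le> length b \<Longrightarrow> b @ c \<in> M \<Longrightarrow>
    overlap_extension M p (y @ c)"
proof (induction rule: overlap_extension.induct)
  case (Nil p)
  then show ?case using overlap_extension.overlap[of b p c M "[]"] by (simp add: overlap_extension.Nil)
next
  case (overlap b' p c' y)
  then show ?case using overlap_extension.overlap[of b' p c' M "y @ c"] by simp
qed

lemma overlap_closure_extend:
  "overlap_extension M p y \<Longrightarrow> x @ p \<in> overlap_closure M \<Longrightarrow> x @ p @ y \<in> overlap_closure M"
proof (induction arbitrary: x rule: overlap_extension.induct)
  case (overlap b p c y)
  then obtain p1 where "p = p1 @ b" by (auto simp: suffix_def)
  with overlap have "x @ (p @ c) \<in> overlap_closure M"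
    using overlap_closure.overlap[of "x @ p1" b M c] by simp
  with overlap.IH show ?case by simp
qed simp

definition open_suffix :: "'a list set \<Rightarrow> 'a list \<Rightarrow> 'a list \<Rightarrow> bool" where
  "open_suffix M u a \<longleftrightarrow> a = u \<or>
    (\<exists>x b d. u = x @ b @ d \<and> x @ b \<in> overlap_closure M \<and> a = b @ d \<and> 2 \<le> length b)"

lemma open_suffix_append: "open_suffix M u a \<Longrightarrow> a @ c \<in> M \<Longrightarrow> u @ c \<in> overlap_closure M"
  unfolding open_suffix_def using overlap_closure.base overlap_closure.overlap by fastforce

definition open_tails :: "'a list set \<Rightarrow> 'a list \<Rightarrow> 'a list set" where
  "open_tails M u = (\<Union>a \<in> Collect (open_suffix M u). lquot a M)"

definition suffix_tails :: "'a list set \<Rightarrow> 'a list \<Rightarrow> 'a list set" where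
  "suffix_tails M u = (\<Union>a \<in> {a. a \<noteq> [] \<and> suffix a u}. lquot a M)"

text \<open>
  A nonempty \<open>z\<close> with \<open>u @ z\<close> in the closure splits as \<open>c2 @ y\<close>: \<open>c1\<close> completes the first factor
  reaching beyond \<open>u\<close>, \<open>c2\<close> completes the last factor starting inside \<open>u\<close>, and \<open>y\<close> is added
  by overlaps within \<open>c2 @ y\<close>.
\<close>

definition tail_lang :: "'a list set \<Rightarrow> 'a list set \<Rightarrow> 'a list set \<Rightarrow> 'a list set" where
  "tail_lang M C1 C2 =
    {c2 @ y | c1 c2 y. c1 \<in> C1 \<and> c1 \<noteq> [] \<and> c2 \<in> C2 \<and> prefix c1 c2 \<and> overlap_extension M c2 y}"

lemma tail_langI:
  "c1 \<in> C1 \<Longrightarrow> c1 \<noteq> [] \<Longrightarrow> c2 \<in> C2 \<Longrightarrow> prefix c1 c2 \<Longrightarrow> overlap_extension M c2 y \<Longrightarrow>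
    z = c2 @ y \<Longrightarrow> z \<in> tail_lang M C1 C2"
  unfolding tail_lang_def by blast

lemma tail_lang_complete:
  assumes "u @ z \<in> overlap_closure M" and "u \<noteq> []" and "z \<noteq> []"
  shows "z \<in> tail_lang M (open_tails M u) (suffix_tails M u)"
  using assms
proof (induction "u @ z" arbitrary: u z rule: overlap_closure.induct)
  case base
  then have "z \<in> open_tails M u" "z \<in> suffix_tails M u"
    by (auto simp: open_tails_def suffix_tails_def open_suffix_def lquot_def)
  with \<open>z \<noteq> []\<close> show ?case by (auto intro: tail_langI overlap_extension.Nil)
next
  case (overlap x b c)
  from \<open>x @ b @ c = u @ z\<close> obtain us where
    "(x @ b = u @ us \<and> us @ c = z) \<or> ((x @ b) @ us = u \<and> c = us @ z)"
    using append_eq_append_conv2[of "x @ b" c u z] by auto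
  then consider us where "u = x @ b @ us" "c = us @ z"
    | us where "x @ b = u @ us" "z = us @ c" "us \<noteq> []"
    by (metis append.assoc append_Nil append.right_neutral)
  then show ?case
  proof cases
    case (1 us)
    with overlap.hyps have "open_suffix M u (b @ us)" "(b @ us) @ z \<in> M" "b @ us \<noteq> []"
      by (auto simp: open_suffix_def)
    with 1 have "z \<in> open_tails M u" "z \<in> suffix_tails M u"
      by (auto simp: open_tails_def suffix_tails_def lquot_def suffix_def)
    with \<open>z \<noteq> []\<close> show ?thesis by (auto intro: tail_langI overlap_extension.Nil)
  next
    case (2 us)
    with overlap.hyps(2)[of u us] \<open>u \<noteq> []\<close> obtain c1 c2 y where us: "us = c2 @ y" and
      c1: "c1 \<in> open_tails M u" "c1 \<noteq> []" "prefix c1 c2" and c2: "c2 \<in> suffix_tails M u"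
      and ext: "overlap_extension M c2 y"
      by (auto simp: tail_lang_def)
    show ?thesis
    proof (cases "suffix b (c2 @ y)")
      case True
      from overlap_extension_snoc[OF ext True overlap.hyps(4,3)]
      have "overlap_extension M c2 (y @ c)" .
      with c1 c2 show ?thesis using 2 us by (auto intro: tail_langI)
    next
      case False
      from \<open>x @ b = u @ us\<close> us obtain vs where
        "(x = u @ vs \<and> vs @ b = c2 @ y) \<or> (x @ vs = u \<and> b = vs @ c2 @ y)"
        using append_eq_append_conv2[of x b u "c2 @ y"] by auto
      with False have "u = x @ vs" "b = vs @ c2 @ y" "vs \<noteq> []"
        unfolding suffix_def by (metis append_self_conv2)+
      with overlap.hyps(3) have "c2 @ y @ c \<in> suffix_tails M u"
        by (auto simp: suffix_tails_def lquot_def suffix_def)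
      moreover from c1 have "prefix c1 (c2 @ y @ c)" by (auto simp: prefix_def)
      ultimately show ?thesis using c1 2 us by (auto intro: tail_langI overlap_extension.Nil)
    qed
  qed
qed

lemma tail_lang_sound:
  assumes "z \<in> tail_lang M (open_tails M u) (suffix_tails M u)"
  shows "u @ z \<in> overlap_closure M"
proof -
  from assms obtain c1 c2 y a1 a2 p e where z: "z = c2 @ y" and
    a1: "open_suffix M u a1" "a1 @ c1 \<in> M" "c1 \<noteq> []" and
    a2: "u = p @ a2" "a2 \<noteq> []" "a2 @ c2 \<in> M" "c2 = c1 @ e" and
    ext: "overlap_extension M c2 y"
    by (auto simp: tail_lang_def open_tails_def suffix_tails_def lquot_def prefix_def suffix_def)
  from a1 have "p @ (a2 @ c1) \<in> overlap_closure M"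
    using open_suffix_append a2(1) by fastforce
  moreover from a2 have "(a2 @ c1) @ e \<in> M" by simp
  moreover from a1(3) a2(2) have "2 \<le> length (a2 @ c1)" by (cases a2; cases c1) auto
  ultimately have "p @ (a2 @ c1) @ e \<in> overlap_closure M" by (rule overlap_closure.overlap)
  then have "u @ c2 \<in> overlap_closure M" using a2 by simp
  from overlap_closure_extend[OF ext this] show ?thesis using z by simp
qed

lemma lquot_overlap_closure:
  assumes "u \<noteq> []"
  shows "lquot u (overlap_closure M) =
    {z. z = [] \<and> u \<in> overlap_closure M} \<union> tail_lang M (open_tails M u) (suffix_tails M u)"
proof (intro equalityI subsetI)
  fix z assume "z \<in> lquot u (overlap_closure M)"
  then show "z \<in> {z. z = [] \<and> u \<in> overlap_closure M} \<union> tail_lang M (open_tails M u) (suffix_tails M u)"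
    using tail_lang_complete[OF _ assms] by (cases "z = []") (auto simp: lquot_def)
qed (auto simp: lquot_def dest: tail_lang_sound)

lemma finite_quotients_overlap_closure:
  assumes "finite_quotients M"
  shows "finite_quotients (overlap_closure M)"
proof -
  let ?Q = "range (\<lambda>w. lquot w M)"
  show ?thesis
  proof (rule finite_quotientsI)
    fix u
    show "lquot u (overlap_closure M) \<in> insert (overlap_closure M)
        ((\<lambda>(E, C1, C2). E \<union> tail_lang M C1 C2) ` ({{}, {[]}} \<times> Union ` Pow ?Q \<times> Union ` Pow ?Q))"
    proof (cases "u = []")
      case False
      have "open_tails M u \<in> Union ` Pow ?Q" "suffix_tails M u \<in> Union ` Pow ?Q"
        unfolding open_tails_def suffix_tails_def by (auto intro!: imageI)
      moreover have "{z. z = [] \<and> u \<in> overlap_closure M} \<in> {{}, {[]}}" by auto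
      ultimately show ?thesis unfolding lquot_overlap_closure[OF False]
        by (intro insertI2) (rule image_eqI[of _ _ "(_, open_tails M u, suffix_tails M u)"], auto)
    qed simp
  qed (use assms in \<open>simp add: finite_quotients_def\<close>)
qed

lemma finite_quotients_long_words:
  assumes "finite_quotients L"
  shows "finite_quotients (long_words L)"
proof (rule finite_quotientsI)
  fix w
  have "lquot w (long_words L) = lquot w L \<inter> {z. 2 \<le> min (length w) 2 + length z}"
    by (auto simp: lquot_def long_words_def)
  then show "lquot w (long_words L) \<in>
      (\<lambda>(q, k). q \<inter> {z. 2 \<le> k + length z}) ` (range (\<lambda>w. lquot w L) \<times> {..2::nat})"
    by (intro image_eqI[of _ _ "(lquot w L, min (length w) 2)"]) auto
qed (use assms in \<open>simp add: finite_quotients_def\<close>)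

theorem lemma4p10:
  fixes Sigma :: "'a set" and L :: "'a list set"
  assumes "finite Sigma"
    and "L \<subseteq> lists Sigma"
    and "regular L"
  shows "regular (OC2_star L)"
proof -
  have "finite_quotients (overlap_closure (long_words L))"
    using assms(3) by (intro finite_quotients_overlap_closure finite_quotients_long_words
        regular_imp_finite_quotients)
  moreover have "overlap_closure (long_words L) \<subseteq> lists Sigma"
    using assms(2) by (intro overlap_closure_lists) (auto simp: long_words_def)
  ultimately have "regular (overlap_closure (long_words L))"
    using assms(1) by (intro finite_quotients_imp_regular)
  then show ?thesis unfolding OC2_star_eq using assms(3) by (rule regular_Un[rotated])
qed

end
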